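(* $\chi^{\mathsf{w}}_{3,3}(n)=\Omega\!\left(\dfrac{\log n}{\log\log n}\right)$ as $n\to\infty$; that is, there are constants $c>0$ and $n_0$ such that for all $n\ge n_0$ there is a $3$-uniform hypergraph on $n$ vertices, linearly embeddable into $\mathbb{R}^3$, with weak chromatic number at least $c\log n/\log\log n$.
   Context: A $k$-uniform hypergraph $H=(V,E)$ consists of a finite set $V$ and $E\subseteq\binom{V}{k}$. A (linear) embedding of $H$ into $\mathbb{R}^d$ is a map $\phi:V(H)\to\mathbb{R}^d$ with $\dim\operatorname{aff}\phi(e)=k-1$ for every edge $e$ and $\operatorname{conv}\phi(e_1)\cap\operatorname{conv}\phi(e_2)=\operatorname{conv}\phi(e_1\cap e_2)$ for all edges $e_1,e_2$. $\mathcal{E}_{d,k}$ is the set of $k$-uniform hypergraphs admitting such an embedding into $\mathbb{R}^d$. A weak $c$-coloring of $H$ is a map $\kappa:V(H)\to\{1,\dots,c\}$ with $|\kappa(e)|>1$ for every edge $e$; $\chi^{\mathsf{w}}(H)$ is the least such $c$. $\chi^{\mathsf{w}}_{d,k}(n)=\max\{\chi^{\mathsf{w}}(H): H\in\mathcal{E}_{d,k},\ |V(H)|=n\}$. *)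

theory Defs
  imports "HOL-Analysis.Analysis"
begin

definition uniform_hypergraph :: "nat \<Rightarrow> 'a set \<Rightarrow> 'a set set \<Rightarrow> bool" where
  "uniform_hypergraph k V E \<longleftrightarrow> finite V \<and> (\<forall>e\<in>E. e \<subseteq> V \<and> card e = k)"

definition linear_embedding :: "nat \<Rightarrow> 'a set \<Rightarrow> 'a set set \<Rightarrow> ('a \<Rightarrow> 'b::euclidean_space) \<Rightarrow> bool" where
  "linear_embedding k V E \<phi> \<longleftrightarrow>
     (\<forall>e\<in>E. aff_dim (\<phi> ` e) = int k - 1) \<and>
     (\<forall>e1\<in>E. \<forall>e2\<in>E. convex hull (\<phi> ` e1) \<inter> convex hull (\<phi> ` e2) = convex hull (\<phi> ` (e1 \<inter> e2)))"

definition embeddable_3_3 :: "'a set \<Rightarrow> 'a set set \<Rightarrow> bool" where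
  "embeddable_3_3 V E \<longleftrightarrow> uniform_hypergraph 3 V E \<and>
     (\<exists>\<phi> :: 'a \<Rightarrow> real^3. linear_embedding 3 V E \<phi>)"

definition weak_coloring :: "'a set \<Rightarrow> 'a set set \<Rightarrow> nat \<Rightarrow> ('a \<Rightarrow> nat) \<Rightarrow> bool" where
  "weak_coloring V E c \<kappa> \<longleftrightarrow> (\<forall>v\<in>V. \<kappa> v \<in> {1..c}) \<and> (\<forall>e\<in>E. card (\<kappa> ` e) > 1)"

definition weak_chromatic_number :: "'a set \<Rightarrow> 'a set set \<Rightarrow> nat" where
  "weak_chromatic_number V E = (LEAST c. \<exists>\<kappa>. weak_coloring V E c \<kappa>)"

end

theory Submission
  imports Defs
begin

text \<open>Place the vertices on the moment curve \<open>t \<mapsto> (t, t\<^sup>2, t\<^sup>3)\<close>. A cubic is an affine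
  function of the curve point, so a cubic that is \<open>\<ge> 0\<close> on one triple of parameters, \<open>\<le> 0\<close> on another
  and vanishes on their union only at common parameters yields a hyperplane showing that the two
  triangles meet exactly in the hull of their common vertices.

  Starting from a single triple, a blow-up step with \<open>m = c + 2\<close> apexes puts, for every pair of
  apexes \<open>i < j\<close>, a block carrying a translated copy of the previous hypergraph, together with all
  ``book'' edges \<open>{apex i, apex j, v}\<close> for \<open>v\<close> in that block. All pairs of edges are separated by
  explicit cubics. In a weak \<open>(c + 1)\<close>-colouring two apexes share a colour, which the book edges then
  forbid on their whole block, leaving a weak \<open>c\<close>-colouring of the copy. After \<open>k\<close> steps the
  hypergraph has at most \<open>(k + 3) ^ (3 (k + 1))\<close> vertices and no weak \<open>(k + 1)\<close>-colouring,
  which gives \<open>\<chi> \<ge> (1/3) log n / log log n\<close>.\<close>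

section \<open>Cubics on the moment curve\<close>

definition moment_curve :: "real \<Rightarrow> real^3" where
  "moment_curve t = vector [t, t^2, t^3]"

lemma inj_moment_curve: "inj moment_curve"
  by (rule injI) (metis moment_curve_def vector_3(1))

definition cubic :: "(real \<Rightarrow> real) \<Rightarrow> bool" where
  "cubic p \<longleftrightarrow> (\<exists>a b c d. \<forall>t. p t = a + b*t + c*t^2 + d*t^3)"

lemma cubic_affine_product: "cubic (\<lambda>t. (a1*t + b1) * (a2*t + b2) * (a3*t + b3))"
  unfolding cubic_def
  by (rule exI[of _ "b1*b2*b3"], rule exI[of _ "a1*b2*b3 + b1*a2*b3 + b1*b2*a3"],
      rule exI[of _ "a1*a2*b3 + a1*b2*a3 + b1*a2*a3"], rule exI[of _ "a1*a2*a3"])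
     (simp add: power2_eq_square power3_eq_cube algebra_simps)

lemma cubic_uminus: "cubic p \<Longrightarrow> cubic (\<lambda>t. - p t)"
proof -
  assume "cubic p"
  then obtain a b c d where "\<And>t. p t = a + b*t + c*t^2 + d*t^3"
    unfolding cubic_def by blast
  then have "\<And>t. - p t = (- a) + (- b)*t + (- c)*t^2 + (- d)*t^3"
    by simp
  then show ?thesis
    unfolding cubic_def by blast
qed

lemma cubic_translate: "cubic p \<Longrightarrow> cubic (\<lambda>t. p (t - h))"
proof -
  assume "cubic p"
  then obtain a b c d where p: "\<And>t. p t = a + b*t + c*t^2 + d*t^3"
    unfolding cubic_def by blast
  have "p (t - h) = (a - b*h + c*h^2 - d*h^3) + (b - 2*c*h + 3*d*h^2)*t + (c - 3*d*h)*t^2 + d*t^3"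
    for t
    unfolding p by (simp add: power2_eq_square power3_eq_cube algebra_simps)
  then show ?thesis
    unfolding cubic_def by blast
qed

lemma cubic_eq_affine_moment_curve:
  assumes "cubic p"
  obtains a w where "\<And>t. p t = a + w \<bullet> moment_curve t"
proof -
  from assms obtain a b c d where "\<And>t. p t = a + b*t + c*t^2 + d*t^3"
    unfolding cubic_def by blast
  then have "p t = a + vector [b, c, d] \<bullet> moment_curve t" for t
    by (simp add: moment_curve_def inner_vec_def sum_3)
  then show thesis by (rule that)
qed

definition cubic_separated :: "real set \<Rightarrow> real set \<Rightarrow> bool" where
  "cubic_separated A B \<longleftrightarrow> (\<exists>p. cubic p \<and> (\<forall>t\<in>A. 0 \<le> p t) \<and> (\<forall>t\<in>B. p t \<le> 0) \<and>
     (\<forall>t\<in>A \<union> B. p t = 0 \<longrightarrow> t \<in> A \<inter> B))"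

lemma cubic_separatedI:
  assumes "cubic p" "\<And>t. t \<in> A - B \<Longrightarrow> 0 < p t" "\<And>t. t \<in> B - A \<Longrightarrow> p t < 0"
    "\<And>t. t \<in> A \<inter> B \<Longrightarrow> p t = 0"
  shows "cubic_separated A B"
  unfolding cubic_separated_def
proof (intro exI[of _ p] conjI ballI impI)
  show "0 \<le> p t" if "t \<in> A" for t
    using that assms(2,4) by (cases "t \<in> B") force+
  show "p t \<le> 0" if "t \<in> B" for t
    using that assms(3,4) by (cases "t \<in> A") force+
  show "t \<in> A \<inter> B" if "t \<in> A \<union> B" "p t = 0" for t
    using that assms(2,3) by force
qed (fact \<open>cubic p\<close>)

lemma cubic_separated_refl: "cubic_separated A A"
  by (rule cubic_separatedI[of "\<lambda>t. 0"]) (use cubic_affine_product[of 0 0 0 0 0 0] in auto)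

lemma cubic_separated_sym: "cubic_separated A B \<Longrightarrow> cubic_separated B A"
proof -
  assume "cubic_separated A B"
  then obtain p where "cubic p" "\<forall>t\<in>A. 0 \<le> p t" "\<forall>t\<in>B. p t \<le> 0"
    "\<forall>t\<in>A \<union> B. p t = 0 \<longrightarrow> t \<in> A \<inter> B"
    unfolding cubic_separated_def by blast
  moreover from \<open>cubic p\<close> have "cubic (\<lambda>t. - p t)"
    by (rule cubic_uminus)
  ultimately show ?thesis
    unfolding cubic_separated_def
    by (intro exI[of _ "\<lambda>t. - p t"])
      (simp only: neg_0_le_iff_le neg_le_0_iff_le neg_equal_0_iff_equal Un_commute Int_commute)
qed

lemma cubic_separated_translate:
  assumes "cubic_separated A B"
  shows "cubic_separated ((+) h ` A) ((+) h ` B)"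
proof -
  from assms obtain p where "cubic p" and pA: "\<forall>t\<in>A. 0 \<le> p t" and pB: "\<forall>t\<in>B. p t \<le> 0"
    and zeros: "\<forall>t\<in>A \<union> B. p t = 0 \<longrightarrow> t \<in> A \<inter> B"
    unfolding cubic_separated_def by blast
  show ?thesis
    unfolding cubic_separated_def
  proof (intro exI[of _ "\<lambda>t. p (t - h)"] conjI ballI impI)
    show "cubic (\<lambda>t. p (t - h))"
      using \<open>cubic p\<close> by (rule cubic_translate)
    show "0 \<le> p (t - h)" if "t \<in> (+) h ` A" for t
      using that pA by auto
    show "p (t - h) \<le> 0" if "t \<in> (+) h ` B" for t
      using that pB by auto
    show "t \<in> (+) h ` A \<inter> (+) h ` B" if "t \<in> (+) h ` A \<union> (+) h ` B" "p (t - h) = 0" for t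
    proof -
      from that obtain x where "t = h + x" "x \<in> A \<union> B" "p x = 0"
        by auto
      with zeros have "x \<in> A \<inter> B"
        by blast
      with \<open>t = h + x\<close> show ?thesis
        by blast
    qed
  qed
qed

lemma convex_hull_Int_supporting_hyperplane:
  fixes S :: "'a::euclidean_space set"
  assumes "finite S" and ge: "\<And>y. y \<in> S \<Longrightarrow> b \<le> w \<bullet> y"
  shows "convex hull S \<inter> {x. w \<bullet> x = b} = convex hull {y\<in>S. w \<bullet> y = b}"
proof
  have "convex hull S \<subseteq> {x. b \<le> w \<bullet> x}"
    using ge by (intro hull_minimal) (auto simp: convex_halfspace_ge)
  then have "(convex hull S \<inter> {x. w \<bullet> x = b}) face_of convex hull S"
    by (intro face_of_Int_supporting_hyperplane_ge) auto
  then obtain S' where "S' \<subseteq> S" and S': "convex hull S \<inter> {x. w \<bullet> x = b} = convex hull S'"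
    using face_of_convex_hull_subset[OF finite_imp_compact[OF \<open>finite S\<close>]] by blast
  have "S' \<subseteq> {x. w \<bullet> x = b}"
    using hull_subset[of S' convex] S' by blast
  with \<open>S' \<subseteq> S\<close> have "convex hull S' \<subseteq> convex hull {y\<in>S. w \<bullet> y = b}"
    by (intro hull_mono) blast
  with S' show "convex hull S \<inter> {x. w \<bullet> x = b} \<subseteq> convex hull {y\<in>S. w \<bullet> y = b}"
    by simp
  show "convex hull {y\<in>S. w \<bullet> y = b} \<subseteq> convex hull S \<inter> {x. w \<bullet> x = b}"
    by (intro Int_greatest hull_mono hull_minimal) (auto simp: convex_hyperplane)
qed

lemma convex_hull_moment_curve_Int:
  assumes "finite A" and sep: "cubic_separated A B"
  shows "convex hull (moment_curve ` A) \<inter> convex hull (moment_curve ` B) =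
         convex hull (moment_curve ` (A \<inter> B))"
proof
  from sep obtain p where "cubic p" and pA: "\<forall>t\<in>A. 0 \<le> p t" and pB: "\<forall>t\<in>B. p t \<le> 0"
    and zeros: "\<forall>t\<in>A \<union> B. p t = 0 \<longrightarrow> t \<in> A \<inter> B"
    unfolding cubic_separated_def by blast
  then obtain a w where p: "\<And>t. p t = a + w \<bullet> moment_curve t"
    using cubic_eq_affine_moment_curve by blast
  have "convex hull (moment_curve ` A) \<subseteq> {x. - a \<le> w \<bullet> x}"
    using pA p by (intro hull_minimal) (auto simp: convex_halfspace_ge)
  moreover have "convex hull (moment_curve ` B) \<subseteq> {x. w \<bullet> x \<le> - a}"
    using pB p by (intro hull_minimal) (auto simp: convex_halfspace_le)
  ultimately have "convex hull (moment_curve ` A) \<inter> convex hull (moment_curve ` B)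
      \<subseteq> convex hull (moment_curve ` A) \<inter> {x. w \<bullet> x = - a}"
    by fastforce
  also have "\<dots> = convex hull {y \<in> moment_curve ` A. w \<bullet> y = - a}"
    using pA p \<open>finite A\<close> by (intro convex_hull_Int_supporting_hyperplane) auto
  also have "\<dots> \<subseteq> convex hull (moment_curve ` (A \<inter> B))"
  proof (intro hull_mono subsetI)
    fix y assume "y \<in> {y \<in> moment_curve ` A. w \<bullet> y = - a}"
    then obtain t where "t \<in> A" "p t = 0" "y = moment_curve t"
      using p by auto
    with zeros show "y \<in> moment_curve ` (A \<inter> B)"
      by blast
  qed
  finally show "convex hull (moment_curve ` A) \<inter> convex hull (moment_curve ` B)
      \<subseteq> convex hull (moment_curve ` (A \<inter> B))" .
  show "convex hull (moment_curve ` (A \<inter> B))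
      \<subseteq> convex hull (moment_curve ` A) \<inter> convex hull (moment_curve ` B)"
    by (simp add: hull_mono image_mono)
qed

lemma affine_dependence_annihilates_affine_function:
  fixes w :: "'a::real_inner"
  assumes "sum U S = 0" "(\<Sum>v\<in>S. U v *\<^sub>R v) = 0"
  shows "(\<Sum>v\<in>S. U v * (a + w \<bullet> v)) = 0"
proof -
  have "(\<Sum>v\<in>S. U v * (a + w \<bullet> v)) = a * sum U S + w \<bullet> (\<Sum>v\<in>S. U v *\<^sub>R v)"
    by (simp add: inner_sum_right sum_distrib_left sum.distrib algebra_simps)
  with assms show ?thesis by simp
qed

lemma aff_dim_moment_curve_triple:
  assumes "x \<noteq> y" "x \<noteq> z" "y \<noteq> z"
  shows "aff_dim (moment_curve ` {x, y, z}) = 2"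
proof -
  let ?S = "moment_curve ` {x, y, z}"
  have inj: "inj_on moment_curve {x, y, z}"
    using inj_moment_curve by (rule inj_on_subset) simp
  have "U (moment_curve p) = 0"
    if U: "sum U ?S = 0" "(\<Sum>v\<in>?S. U v *\<^sub>R v) = 0" and "p \<in> {x, y, z}" for U p
  proof -
    obtain q r where qr: "{x, y, z} = {p, q, r}" "p \<noteq> q" "p \<noteq> r" "q \<noteq> r"
      using \<open>p \<in> {x, y, z}\<close> assms by auto
    define f where "f t = (t - q) * (t - r)" for t
    have "cubic f"
      unfolding f_def using cubic_affine_product[of 1 "- q" 1 "- r" 0 1] by simp
    then obtain a w where f: "\<And>t. f t = a + w \<bullet> moment_curve t"
      using cubic_eq_affine_moment_curve by blast
    have "0 = (\<Sum>v\<in>?S. U v * (a + w \<bullet> v))"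
      using U by (rule affine_dependence_annihilates_affine_function[symmetric])
    also have "\<dots> = (\<Sum>t\<in>{x, y, z}. U (moment_curve t) * f t)"
      by (subst sum.reindex[OF inj]) (simp add: f)
    also have "\<dots> = U (moment_curve p) * f p"
      using qr by (simp add: f_def)
    finally show ?thesis
      using qr by (simp add: f_def)
  qed
  moreover have "finite ?S"
    by simp
  ultimately have "\<not> affine_dependent ?S"
    using affine_dependent_explicit_finite by blast
  then have "int (card ?S) = aff_dim ?S + 1"
    by (rule aff_dim_affine_independent)
  moreover have "card ?S = 3"
    using assms inj by (simp add: card_image)
  ultimately show ?thesis by simp
qed

section \<open>Separating triples on the line\<close>

lemma cubic_separated_empty: "cubic_separated {} B"
  by (rule cubic_separatedI[of "\<lambda>t. - 1"]) (use cubic_affine_product[of 0 "- 1" 0 1 0 1] in auto)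

lemma cubic_separated_slab:
  assumes A: "\<forall>t\<in>A. a < t \<and> t < b" and B: "\<forall>t\<in>B. t < a \<or> b < t"
  shows "cubic_separated A B"
proof (cases "a < b")
  case True
  show ?thesis
  proof (rule cubic_separatedI[of "\<lambda>t. (t - a) * (b - t)"])
    show "cubic (\<lambda>t. (t - a) * (b - t))"
      using cubic_affine_product[of 1 "- a" "- 1" b 0 1] by simp
    show "0 < (t - a) * (b - t)" if "t \<in> A - B" for t
      using that A by (simp add: zero_less_mult_iff)
    show "(t - a) * (b - t) < 0" if "t \<in> B - A" for t
      using that B True by (auto simp add: mult_less_0_iff)
    show "(t - a) * (b - t) = 0" if "t \<in> A \<inter> B" for t
      using that A B by force
  qed
next
  case False
  with A have "A = {}"
    by force
  then show ?thesis
    by (simp add: cubic_separated_empty)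
qed

text \<open>The witness is \<open>(t - c)((t - v)\<^sup>2 - \<delta>\<^sup>2)\<close>; the gap \<open>\<delta>\<close> isolates \<open>v\<close> from the
  other points of \<open>A\<close> and must vanish exactly when \<open>v\<close> itself lies in \<open>A\<close>.\<close>
lemma cubic_separated_beyond_threshold:
  assumes "x < c" "y < c" "c < v" and A: "\<forall>t\<in>A. c < t" and gap: "\<forall>t\<in>A. t \<noteq> v \<longrightarrow> \<delta> < \<bar>t - v\<bar>"
    and "0 \<le> \<delta>" "\<delta> < v - c" and v: "v \<in> A \<longleftrightarrow> \<delta> = 0"
  shows "cubic_separated A {x, y, v}"
proof (rule cubic_separatedI[of "\<lambda>t. (t - c) * ((t - v)^2 - \<delta>^2)"])
  show "cubic (\<lambda>t. (t - c) * ((t - v)^2 - \<delta>^2))"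
    using cubic_affine_product[of 1 "- c" 1 "- v - \<delta>" 1 "\<delta> - v"]
    by (simp add: algebra_simps power2_eq_square)
  have far: "\<delta>^2 < (t - v)^2" if "\<delta> < \<bar>t - v\<bar>" for t
    using that abs_le_square_iff[of "t - v" \<delta>] \<open>0 \<le> \<delta>\<close> by simp
  show "0 < (t - c) * ((t - v)^2 - \<delta>^2)" if "t \<in> A - {x, y, v}" for t
    using that A gap far by (simp add: zero_less_mult_iff)
  have "\<delta> < \<bar>x - v\<bar>" "\<delta> < \<bar>y - v\<bar>"
    using assms(1-3,7) by auto
  then show "(t - c) * ((t - v)^2 - \<delta>^2) < 0" if "t \<in> {x, y, v} - A" for t
    using that assms(1-3) v far \<open>0 \<le> \<delta>\<close> by (auto simp: mult_less_0_iff)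
  show "(t - c) * ((t - v)^2 - \<delta>^2) = 0" if "t \<in> A \<inter> {x, y, v}" for t
    using that assms(1,2) A v by force
qed

lemma cubic_separated_swap_last:
  assumes "x < v" "y < v" "v < w"
  shows "cubic_separated {x, y, v} {x, y, w}"
proof -
  define r where "r = (v + w) / 2"
  have "v < r" "r < w"
    using assms by (simp_all add: r_def)
  show ?thesis
  proof (rule cubic_separatedI[of "\<lambda>t. (t - x) * (t - y) * (r - t)"])
    show "cubic (\<lambda>t. (t - x) * (t - y) * (r - t))"
      using cubic_affine_product[of 1 "- x" 1 "- y" "- 1" r] by (simp add: algebra_simps)
  qed (use assms \<open>v < r\<close> \<open>r < w\<close> in \<open>auto simp: zero_less_mult_iff mult_less_0_iff\<close>)
qed

lemma cubic_separated_common_root_split: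
  assumes "x < M" "v < M" "s < M" "M < y" "M < w" "x \<noteq> s" "v \<noteq> s"
  shows "cubic_separated {s, x, v} {s, y, w}"
proof (rule cubic_separatedI[of "\<lambda>t. (t - s)^2 * (M - t)"])
  show "cubic (\<lambda>t. (t - s)^2 * (M - t))"
    using cubic_affine_product[of 1 "- s" 1 "- s" "- 1" M] by (simp add: algebra_simps power2_eq_square)
qed (use assms in \<open>auto simp: zero_less_mult_iff mult_less_0_iff\<close>)

lemma cubic_separated_alternating:
  assumes "x1 < y1" "y1 < x2" "x2 < v" "v < y2" "y2 < w"
  shows "cubic_separated {x1, x2, v} {y1, y2, w}"
proof -
  define r1 r2 r3 where "r1 = (x1 + y1) / 2" and "r2 = (y1 + x2) / 2" and "r3 = (v + y2) / 2"
  have "x1 < r1" "r1 < y1" "y1 < r2" "r2 < x2" "v < r3" "r3 < y2"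
    using assms by (simp_all add: r1_def r2_def r3_def)
  show ?thesis
  proof (rule cubic_separatedI[of "\<lambda>t. (r1 - t) * (t - r2) * (t - r3)"])
    show "cubic (\<lambda>t. (r1 - t) * (t - r2) * (t - r3))"
      using cubic_affine_product[of "- 1" r1 1 "- r2" 1 "- r3"] by (simp add: algebra_simps)
  qed (use assms \<open>x1 < r1\<close> \<open>r1 < y1\<close> \<open>y1 < r2\<close> \<open>r2 < x2\<close> \<open>v < r3\<close> \<open>r3 < y2\<close> in
       \<open>auto simp: zero_less_mult_iff mult_less_0_iff\<close>)
qed

lemma cubic_separated_common_middle:
  assumes "x < y" "y < s" "s < v" "v < w"
  shows "cubic_separated {x, s, v} {y, s, w}"
proof -
  define r1 r2 where "r1 = (x + y) / 2" and "r2 = (v + w) / 2"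
  have "x < r1" "r1 < y" "v < r2" "r2 < w"
    using assms by (simp_all add: r1_def r2_def)
  show ?thesis
  proof (rule cubic_separatedI[of "\<lambda>t. (r1 - t) * (t - s) * (t - r2)"])
    show "cubic (\<lambda>t. (r1 - t) * (t - s) * (t - r2))"
      using cubic_affine_product[of "- 1" r1 1 "- s" 1 "- r2"] by (simp add: algebra_simps)
  qed (use assms \<open>x < r1\<close> \<open>r1 < y\<close> \<open>v < r2\<close> \<open>r2 < w\<close> in
       \<open>auto simp: zero_less_mult_iff mult_less_0_iff\<close>)
qed

lemma cubic_separated_nat_interval:
  fixes A B :: "nat set"
  assumes "A \<subseteq> {lo..<hi}" and "B \<inter> {lo..<hi} = {}"
  shows "cubic_separated (real ` A) (real ` B)"
proof (rule cubic_separated_slab[of _ "real lo - 1/2" "real hi - 1/2"])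
  have "real lo - 1/2 < real t \<and> real t < real hi - 1/2" if "lo \<le> t" "t < hi" for t
    using that by linarith
  then show "\<forall>t\<in>real ` A. real lo - 1/2 < t \<and> t < real hi - 1/2"
    using assms(1) by fastforce
  have "real t < real lo - 1/2 \<or> real hi - 1/2 < real t" if "t < lo \<or> hi \<le> t" for t
    using that by linarith
  then show "\<forall>t\<in>real ` B. t < real lo - 1/2 \<or> real hi - 1/2 < t"
    using assms(2) by fastforce
qed

section \<open>Weak colourings\<close>

lemma pigeonhole_lessThan:
  fixes f :: "nat \<Rightarrow> nat"
  assumes "f ` {..<m} \<subseteq> {1..c}" "c < m"
  obtains i j where "i < j" "j < m" "f i = f j"
proof -
  have "card (f ` {..<m}) < card {..<m}"
    using card_mono[OF finite_atLeastAtMost assms(1)] assms(2) by simp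
  then have "\<not> inj_on f {..<m}"
    by (rule pigeonhole)
  then obtain i0 j0 where "i0 < m" "j0 < m" "i0 \<noteq> j0" "f i0 = f j0"
    unfolding inj_on_def by auto
  then show thesis
    by (metis linorder_neqE_nat that)
qed

lemma weak_coloring_mono: "c \<le> c' \<Longrightarrow> weak_coloring V E c \<kappa> \<Longrightarrow> weak_coloring V E c' \<kappa>"
  unfolding weak_coloring_def by auto

lemma weak_coloring_subset: "V' \<subseteq> V \<Longrightarrow> weak_coloring V E c \<kappa> \<Longrightarrow> weak_coloring V' E c \<kappa>"
  unfolding weak_coloring_def by blast

lemma weak_coloring_pullback:
  assumes col: "weak_coloring V' E' c \<kappa>" and "f ` V \<subseteq> V'" and edges: "\<And>e. e \<in> E \<Longrightarrow> f ` e \<in> E'"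
  shows "weak_coloring V E c (\<kappa> \<circ> f)"
  unfolding weak_coloring_def
proof (intro conjI ballI)
  fix v assume "v \<in> V"
  with \<open>f ` V \<subseteq> V'\<close> have "f v \<in> V'"
    by blast
  with col show "(\<kappa> \<circ> f) v \<in> {1..c}"
    unfolding weak_coloring_def by simp
next
  fix e assume "e \<in> E"
  with col edges have "1 < card (\<kappa> ` f ` e)"
    unfolding weak_coloring_def by simp
  then show "1 < card ((\<kappa> \<circ> f) ` e)"
    by (simp add: image_comp)
qed

lemma weak_coloring_omit_color:
  assumes col: "weak_coloring V E (Suc c) \<kappa>" and E: "\<forall>e\<in>E. e \<subseteq> V"
    and a: "a \<in> {1..Suc c}" and avoid: "\<forall>v\<in>V. \<kappa> v \<noteq> a"
  shows "weak_coloring V E c (\<lambda>v. if \<kappa> v < a then \<kappa> v else \<kappa> v - 1)"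
    (is "weak_coloring V E c (\<lambda>v. ?r (\<kappa> v))")
  unfolding weak_coloring_def
proof (intro conjI ballI)
  fix v assume "v \<in> V"
  with col avoid have "\<kappa> v \<in> {1..Suc c}" "\<kappa> v \<noteq> a"
    unfolding weak_coloring_def by blast+
  with a show "?r (\<kappa> v) \<in> {1..c}"
    by auto
next
  fix e assume "e \<in> E"
  with E avoid have "a \<notin> \<kappa> ` e"
    by blast
  have "inj_on ?r (\<kappa> ` e)"
  proof (rule inj_onI)
    fix x y assume "x \<in> \<kappa> ` e" "y \<in> \<kappa> ` e" "?r x = ?r y"
    moreover from calculation \<open>a \<notin> \<kappa> ` e\<close> have "x \<noteq> a" "y \<noteq> a"
      by blast+
    ultimately show "x = y"
      by (auto split: if_splits)
  qed
  then have "card ((\<lambda>v. ?r (\<kappa> v)) ` e) = card (\<kappa> ` e)"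
    unfolding image_image[of ?r \<kappa> e, symmetric] by (rule card_image)
  with \<open>e \<in> E\<close> col show "1 < card ((\<lambda>v. ?r (\<kappa> v)) ` e)"
    unfolding weak_coloring_def by simp
qed

lemma weak_coloring_Suc:
  assumes "\<forall>e\<in>E. 1 < card e"
  shows "weak_coloring {..<n} E n Suc"
  using assms unfolding weak_coloring_def by (auto simp: card_image)

lemma weak_chromatic_number_gt:
  assumes "weak_coloring V E d \<kappa>" and "\<nexists>\<kappa>. weak_coloring V E c \<kappa>"
  shows "c < weak_chromatic_number V E"
proof (rule ccontr)
  let ?\<chi> = "weak_chromatic_number V E"
  assume "\<not> c < ?\<chi>"
  from assms(1) have "\<exists>c \<kappa>. weak_coloring V E c \<kappa>"
    by blast
  then have "\<exists>\<kappa>'. weak_coloring V E ?\<chi> \<kappa>'"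
    unfolding weak_chromatic_number_def by (rule LeastI_ex[where P = "\<lambda>c. \<exists>\<kappa>. weak_coloring V E c \<kappa>"])
  then obtain \<kappa>' where "weak_coloring V E ?\<chi> \<kappa>'"
    by blast
  moreover from \<open>\<not> c < ?\<chi>\<close> have "?\<chi> \<le> c"
    by simp
  ultimately have "weak_coloring V E c \<kappa>'"
    by (intro weak_coloring_mono[of ?\<chi> c])
  with assms(2) show False
    by blast
qed

section \<open>The blow-up step\<close>

definition cubic_separated_system :: "nat \<Rightarrow> nat set set \<Rightarrow> bool" where
  "cubic_separated_system N E \<longleftrightarrow> (\<forall>e\<in>E. e \<subseteq> {..<N} \<and> card e = 3) \<and>
     (\<forall>e\<in>E. \<forall>e'\<in>E. cubic_separated (real ` e) (real ` e'))"

context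
  fixes m N :: nat
begin

text \<open>Vertex layout of the blow-up with \<open>m\<close> apexes of a hypergraph on \<open>{..<N}\<close>: apex \<open>j\<close> is the
  vertex \<open>j * stride\<close>, and the \<open>stride - 1 = m * N\<close> vertices following it form the blocks \<open>(i, j)\<close>,
  \<open>i < m\<close>, of \<open>N\<close> vertices each; only the blocks with \<open>i < j\<close> carry edges.\<close>

definition stride :: nat where
  "stride = 1 + m * N"

definition apex :: "nat \<Rightarrow> nat" where
  "apex j = j * stride"

definition block_start :: "nat \<Rightarrow> nat \<Rightarrow> nat" where
  "block_start i j = apex j + 1 + i * N"

definition block :: "nat \<Rightarrow> nat \<Rightarrow> nat set" where
  "block i j = {block_start i j ..< block_start i j + N}"

definition block_copy :: "nat \<Rightarrow> nat \<Rightarrow> nat set \<Rightarrow> nat set" where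
  "block_copy i j e = (+) (block_start i j) ` e"

definition book_edge :: "nat \<Rightarrow> nat \<Rightarrow> nat \<Rightarrow> nat set" where
  "book_edge i j u = {apex i, apex j, block_start i j + u}"

definition blowup_edges :: "nat set set \<Rightarrow> nat set set" where
  "blowup_edges E = {block_copy i j e |i j e. i < j \<and> j < m \<and> e \<in> E} \<union>
                    {book_edge i j u |i j u. i < j \<and> j < m \<and> u < N}"

definition blowup_size :: nat where
  "blowup_size = apex m"

lemma block_offset_less_stride:
  assumes "i < m" "u < N"
  shows "1 + i * N + u < stride"
proof -
  have "i * N + N \<le> m * N"
    using mult_le_mono1[of "Suc i" m N] assms(1) by simp
  with assms(2) show ?thesis
    unfolding stride_def by linarith
qed

lemma apex_add_stride_le: "j < j' \<Longrightarrow> apex j + stride \<le> apex j'"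
  using mult_le_mono1[of "Suc j" j' stride] by (simp add: apex_def)

lemma apex_less: "j < j' \<Longrightarrow> apex j < apex j'"
  using apex_add_stride_le[of j j'] by (simp add: stride_def)

lemma apex_less_block_vertex: "apex j < block_start i j + u"
  by (simp add: block_start_def)

lemma block_vertex_less_apex:
  assumes "i < m" "u < N" "j < j'"
  shows "block_start i j + u < apex j'"
  using block_offset_less_stride[OF assms(1,2)] apex_add_stride_le[OF assms(3)]
  unfolding block_start_def by linarith

lemma block_vertex_less_block_vertex:
  assumes "i < i'" "u < N"
  shows "block_start i j + u < block_start i' j + u'"
proof -
  have "i * N + N \<le> i' * N"
    using mult_le_mono1[of "Suc i" i' N] assms(1) by simp
  with assms(2) show ?thesis
    unfolding block_start_def by linarith
qed

lemma block_vertex_div_mod: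
  assumes "i < m" "u < N"
  shows "(block_start i j + u) div stride = j" "(block_start i j + u) mod stride = 1 + i * N + u"
proof -
  define r where "r = 1 + i * N + u"
  have "r < stride"
    unfolding r_def by (rule block_offset_less_stride[OF assms])
  moreover have "block_start i j + u = r + j * stride"
    by (simp add: r_def block_start_def apex_def)
  ultimately show "(block_start i j + u) div stride = j" "(block_start i j + u) mod stride = 1 + i * N + u"
    unfolding r_def[symmetric] by simp_all
qed

lemma block_vertex_inject:
  assumes "i < m" "u < N" "i' < m" "u' < N" "block_start i j + u = block_start i' j' + u'"
  shows "i = i'" "j = j'" "u = u'"
proof -
  have "i * N + u = i' * N + u'"
    using block_vertex_div_mod(2)[OF assms(1,2), of j] block_vertex_div_mod(2)[OF assms(3,4), of j']
    by (simp add: assms(5))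
  then have "(i * N + u) div N = (i' * N + u') div N" "(i * N + u) mod N = (i' * N + u') mod N"
    by simp_all
  with assms(2,4) show "i = i'" "u = u'"
    by simp_all
  show "j = j'"
    using block_vertex_div_mod(1)[OF assms(1,2), of j] block_vertex_div_mod(1)[OF assms(3,4), of j']
    by (simp add: assms(5))
qed

lemma block_Int_block:
  assumes "i < m" "i' < m" "(i', j') \<noteq> (i, j)"
  shows "block i' j' \<inter> block i j = {}"
proof (rule ccontr)
  assume "block i' j' \<inter> block i j \<noteq> {}"
  then obtain t where t: "t \<in> block i' j'" "t \<in> block i j"
    by blast
  define u' u where "u' = t - block_start i' j'" and "u = t - block_start i j"
  from t have "u' < N" "u < N" "block_start i' j' + u' = block_start i j + u"
    unfolding block_def u'_def u_def by auto
  with assms show False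
    using block_vertex_inject[of i' u' i u j' j] by auto
qed

lemma apex_notin_block:
  assumes "i < m"
  shows "apex a \<notin> block i j"
proof
  assume "apex a \<in> block i j"
  then have "apex a = block_start i j + (apex a - block_start i j)" "apex a - block_start i j < N"
    unfolding block_def by auto
  then have "apex a mod stride = 1 + i * N + (apex a - block_start i j)"
    using block_vertex_div_mod(2)[OF assms] by metis
  then show False
    by (simp add: apex_def)
qed

lemma block_copy_subset_block: "e \<subseteq> {..<N} \<Longrightarrow> block_copy i j e \<subseteq> block i j"
  unfolding block_copy_def block_def by auto

lemma book_edge_subset: "u < N \<Longrightarrow> book_edge i j u \<subseteq> {apex i, apex j} \<union> block i j"
  unfolding book_edge_def block_def by auto

lemma book_edge_Int_block:
  assumes "i < m" "i' < m" "(i', j') \<noteq> (i, j)" "u' < N"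
  shows "book_edge i' j' u' \<inter> block i j = {}"
  using book_edge_subset[OF assms(4), of i' j'] block_Int_block[OF assms(1-3)]
    apex_notin_block[OF assms(1)] by blast

lemma real_block_copy: "real ` block_copy i j e = (+) (real (block_start i j)) ` real ` e"
  by (simp add: block_copy_def image_image)

lemma real_book_edge:
  "real ` book_edge i j u = {real (apex i), real (apex j), real (block_start i j + u)}"
  by (simp add: book_edge_def)

lemma cubic_separated_block_copies:
  assumes "cubic_separated (real ` e) (real ` e')" "e \<subseteq> {..<N}" "e' \<subseteq> {..<N}" "i < m" "i' < m"
  shows "cubic_separated (real ` block_copy i j e) (real ` block_copy i' j' e')"
proof (cases "(i', j') = (i, j)")
  case True
  then show ?thesis
    using cubic_separated_translate[OF assms(1)] by (simp add: real_block_copy)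
next
  case False
  have "block_copy i' j' e' \<inter> block i j = {}"
    using block_copy_subset_block[OF assms(3)] block_Int_block[OF assms(4,5) False] by blast
  with block_copy_subset_block[OF assms(2)] show ?thesis
    unfolding block_def by (rule cubic_separated_nat_interval)
qed

lemma cubic_separated_block_copy_book_edge:
  assumes "e \<subseteq> {..<N}" "i < j" "j < m" "i' < m" "u' < N"
  shows "cubic_separated (real ` block_copy i j e) (real ` book_edge i' j' u')"
proof (cases "(i', j') = (i, j)")
  case True
  define v where "v = block_start i j + u'"
  define \<delta> where "\<delta> = (if v \<in> block_copy i j e then 0 else 1/2 :: real)"
  have above: "apex j < t" if "t \<in> block_copy i j e" for t
    using that apex_less_block_vertex by (auto simp: block_copy_def)
  have "cubic_separated (real ` block_copy i j e) {real (apex i), real (apex j), real v}"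
  proof (rule cubic_separated_beyond_threshold[where c = "real (apex j) + 1/4" and \<delta> = \<delta>])
    show "real (apex i) < real (apex j) + 1/4" "real (apex j) < real (apex j) + 1/4"
      using apex_less[OF assms(2)] by simp_all
    show "real (apex j) + 1/4 < real v" "\<delta> < real v - (real (apex j) + 1/4)"
      using apex_less_block_vertex[of j i u'] by (auto simp: v_def \<delta>_def)
    show "\<forall>t\<in>real ` block_copy i j e. real (apex j) + 1/4 < t"
      using above by force
    have "\<delta> < \<bar>real t - real v\<bar>" if "t \<noteq> v" for t
    proof -
      from that have "real t + 1 \<le> real v \<or> real v + 1 \<le> real t"
        by linarith
      then show ?thesis
        by (auto simp: \<delta>_def)
    qed
    then show "\<forall>t\<in>real ` block_copy i j e. t \<noteq> real v \<longrightarrow> \<delta> < \<bar>t - real v\<bar>"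
      by force
    show "0 \<le> \<delta>" "real v \<in> real ` block_copy i j e \<longleftrightarrow> \<delta> = 0"
      by (auto simp: \<delta>_def)
  qed
  with True show ?thesis
    by (simp add: real_book_edge v_def)
next
  case False
  have "i < m"
    using assms(2,3) by simp
  from book_edge_Int_block[OF this assms(4) False assms(5)] block_copy_subset_block[OF assms(1)]
  show ?thesis
    unfolding block_def by (intro cubic_separated_nat_interval)
qed

lemma cubic_separated_book_edges_same_apex:
  assumes "i < j" "i' < j" "j < m" "u < N" "u' < N"
  shows "cubic_separated (real ` book_edge i j u) (real ` book_edge i' j u')"
proof -
  define v v' where "v = block_start i j + u" and "v' = block_start i' j + u'"
  have order: "real (apex i) < real (apex j)" "real (apex i') < real (apex j)"
    "real (apex j) < real v" "real (apex j) < real v'"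
    using apex_less[OF assms(1)] apex_less[OF assms(2)] apex_less_block_vertex
    by (simp_all only: v_def v'_def of_nat_less_iff)
  consider "i = i'" "u = u'" | "i = i'" "u < u'" | "i = i'" "u' < u" | "i < i'" | "i' < i"
    by linarith
  then show ?thesis
  proof cases
    case 1
    then show ?thesis
      by (simp add: cubic_separated_refl)
  next
    case 2
    then have "real v < real v'"
      by (simp add: v_def v'_def)
    with 2 show ?thesis
      unfolding real_book_edge v_def[symmetric] v'_def[symmetric]
      unfolding 2(1)[symmetric]
      using order by (intro cubic_separated_swap_last) simp_all
  next
    case 3
    then have "real v' < real v"
      by (simp add: v_def v'_def)
    with 3 show ?thesis
      unfolding real_book_edge v_def[symmetric] v'_def[symmetric]
      unfolding 3(1)[symmetric]
      using order by (intro cubic_separated_sym[OF cubic_separated_swap_last]) simp_all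
  next
    case 4
    then have "real (apex i) < real (apex i')" "real v < real v'"
      using apex_less[OF 4] block_vertex_less_block_vertex[OF 4 assms(4)]
      by (simp_all only: v_def v'_def of_nat_less_iff)
    then show ?thesis
      unfolding real_book_edge v_def[symmetric] v'_def[symmetric]
      using order by (intro cubic_separated_common_middle) simp_all
  next
    case 5
    then have "real (apex i') < real (apex i)" "real v' < real v"
      using apex_less[OF 5] block_vertex_less_block_vertex[OF 5 assms(5)]
      by (simp_all only: v_def v'_def of_nat_less_iff)
    then show ?thesis
      unfolding real_book_edge v_def[symmetric] v'_def[symmetric]
      using order by (intro cubic_separated_sym[OF cubic_separated_common_middle]) simp_all
  qed
qed

lemma cubic_separated_book_edges_less:
  assumes "i < j" "j < j'" "i' < j'" "j' < m" "u < N" "u' < N"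
  shows "cubic_separated (real ` book_edge i j u) (real ` book_edge i' j' u')"
proof -
  define v v' where "v = block_start i j + u" and "v' = block_start i' j' + u'"
  have "i < m" "i' < m"
    using assms by simp_all
  have order: "apex i < apex j" "apex j < v" "v < apex j'" "apex j' < v'"
    using apex_less[OF assms(1)] apex_less_block_vertex block_vertex_less_apex[OF \<open>i < m\<close> assms(5,2)]
    by (simp_all add: v_def v'_def)
  then have real_order: "real (apex i) < real (apex j)" "real (apex j) < real v"
    "real v < real (apex j')" "real (apex j') < real v'"
    by simp_all
  then obtain M where M: "real v < M" "M < real (apex j')"
    using dense by blast
  consider "i' = j" | "i' = i" | "j < i'" | "i < i'" "i' < j" | "i' < i"
    by linarith
  then show ?thesis
  proof cases
    case 1
    have "cubic_separated {real (apex j), real (apex i), real v} {real (apex j), real (apex j'), real v'}"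
      using real_order M by (intro cubic_separated_common_root_split[where M = M]) linarith+
    with 1 show ?thesis
      by (simp add: real_book_edge v_def v'_def insert_commute)
  next
    case 2
    have "cubic_separated {real (apex i), real (apex j), real v} {real (apex i), real (apex j'), real v'}"
      using real_order M by (intro cubic_separated_common_root_split[where M = M]) linarith+
    with 2 show ?thesis
      by (simp add: real_book_edge v_def v'_def)
  next
    case 3
    have "book_edge i j u \<subseteq> {0..<apex i'}"
      using order apex_less[OF 3] block_vertex_less_apex[OF \<open>i < m\<close> assms(5) 3]
      by (auto simp: book_edge_def v_def)
    moreover have "book_edge i' j' u' \<inter> {0..<apex i'} = {}"
      using order apex_less[OF assms(3)] by (auto simp: book_edge_def v'_def)
    ultimately show ?thesis
      by (rule cubic_separated_nat_interval)
  next
    case 4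
    then have "real (apex i) < real (apex i')" "real (apex i') < real (apex j)"
      using apex_less[OF 4(1)] apex_less[OF 4(2)] by simp_all
    then show ?thesis
      unfolding real_book_edge v_def[symmetric] v'_def[symmetric]
      using real_order by (intro cubic_separated_alternating)
  next
    case 5
    have "book_edge i j u \<subseteq> {apex i..<apex j'}"
      using order by (auto simp: book_edge_def v_def)
    moreover have "book_edge i' j' u' \<inter> {apex i..<apex j'} = {}"
      using order apex_less[OF 5] by (auto simp: book_edge_def v'_def)
    ultimately show ?thesis
      by (rule cubic_separated_nat_interval)
  qed
qed

lemma cubic_separated_book_edges:
  assumes "i < j" "j < m" "i' < j'" "j' < m" "u < N" "u' < N"
  shows "cubic_separated (real ` book_edge i j u) (real ` book_edge i' j' u')"
proof -
  consider "j < j'" | "j = j'" | "j' < j"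
    by linarith
  then show ?thesis
  proof cases
    case 1
    then show ?thesis
      using assms cubic_separated_book_edges_less by blast
  next
    case 2
    then show ?thesis
      using assms cubic_separated_book_edges_same_apex by blast
  next
    case 3
    then show ?thesis
      using assms cubic_separated_book_edges_less cubic_separated_sym by blast
  qed
qed

lemma block_subset_blowup:
  assumes "i < m" "j < m"
  shows "block i j \<subseteq> {..<blowup_size}"
proof
  fix t assume "t \<in> block i j"
  then have "t = block_start i j + (t - block_start i j)" "t - block_start i j < N"
    unfolding block_def by auto
  with block_vertex_less_apex[OF assms(1) _ assms(2)] show "t \<in> {..<blowup_size}"
    unfolding blowup_size_def by (metis lessThan_iff)
qed

lemma book_edge_subset_blowup:
  assumes "i < j" "j < m" "u < N"
  shows "book_edge i j u \<subseteq> {..<blowup_size}"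
  using apex_less[of i m] apex_less[of j m] block_vertex_less_apex[of i u j m] assms
  unfolding book_edge_def blowup_size_def by simp

lemma card_book_edge: "i < j \<Longrightarrow> card (book_edge i j u) = 3"
  using apex_less[of i j] apex_less_block_vertex[of j i u] by (simp add: book_edge_def)

lemma card_block_copy: "card (block_copy i j e) = card e"
  by (simp add: block_copy_def card_image)

lemma blowup_edgesE:
  assumes "e \<in> blowup_edges E"
  obtains (copy) i j e0 where "e = block_copy i j e0" "i < j" "j < m" "e0 \<in> E"
    | (book) i j u where "e = book_edge i j u" "i < j" "j < m" "u < N"
  using assms unfolding blowup_edges_def by blast

lemma blowup_edge_bounds:
  assumes E: "\<And>e. e \<in> E \<Longrightarrow> e \<subseteq> {..<N} \<and> card e = 3" and "e \<in> blowup_edges E"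
  shows "e \<subseteq> {..<blowup_size} \<and> card e = 3"
  using \<open>e \<in> blowup_edges E\<close>
proof (cases rule: blowup_edgesE)
  case (copy i j e0)
  have "e \<subseteq> block i j"
    unfolding copy(1) using E[OF copy(4)] by (intro block_copy_subset_block) simp
  also have "\<dots> \<subseteq> {..<blowup_size}"
    using copy(2,3) by (intro block_subset_blowup) simp_all
  finally show ?thesis
    using E[OF copy(4)] by (simp add: copy(1) card_block_copy)
next
  case (book i j u)
  then show ?thesis
    using book_edge_subset_blowup card_book_edge by simp
qed

lemma cubic_separated_blowup_edges:
  assumes E: "\<And>e. e \<in> E \<Longrightarrow> e \<subseteq> {..<N}"
    and sepE: "\<And>e e'. e \<in> E \<Longrightarrow> e' \<in> E \<Longrightarrow> cubic_separated (real ` e) (real ` e')"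
    and "e \<in> blowup_edges E" "e' \<in> blowup_edges E"
  shows "cubic_separated (real ` e) (real ` e')"
  using \<open>e \<in> blowup_edges E\<close>
proof (cases rule: blowup_edgesE)
  case (copy i j e0)
  note e = this
  show ?thesis
    using \<open>e' \<in> blowup_edges E\<close>
  proof (cases rule: blowup_edgesE)
    case (copy i' j' e0')
    show ?thesis
      unfolding e(1) copy(1)
      using sepE[OF e(4) copy(4)] E[OF e(4)] E[OF copy(4)] e(2,3) copy(2,3)
      by (intro cubic_separated_block_copies) simp_all
  next
    case (book i' j' u')
    show ?thesis
      unfolding e(1) book(1)
      using E[OF e(4)] e(2,3) book(2-4)
      by (intro cubic_separated_block_copy_book_edge) simp_all
  qed
next
  case (book i j u)
  note e = this
  show ?thesis
    using \<open>e' \<in> blowup_edges E\<close>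
  proof (cases rule: blowup_edgesE)
    case (copy i' j' e0')
    show ?thesis
      unfolding copy(1) e(1)
      using E[OF copy(4)] copy(2,3) e(2-4)
      by (intro cubic_separated_sym[OF cubic_separated_block_copy_book_edge]) simp_all
  next
    case (book i' j' u')
    show ?thesis
      unfolding e(1) book(1)
      by (rule cubic_separated_book_edges[OF e(2,3) book(2,3) e(4) book(4)])
  qed
qed

lemma cubic_separated_system_blowup:
  assumes "cubic_separated_system N E"
  shows "cubic_separated_system blowup_size (blowup_edges E)"
proof -
  from assms have E: "e \<subseteq> {..<N} \<and> card e = 3" if "e \<in> E" for e
    using that unfolding cubic_separated_system_def by blast
  from assms have sepE: "cubic_separated (real ` e) (real ` e')" if "e \<in> E" "e' \<in> E" for e e'
    using that unfolding cubic_separated_system_def by blast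
  show ?thesis
    unfolding cubic_separated_system_def
  proof (intro conjI ballI)
    show "e \<subseteq> {..<blowup_size}" "card e = 3" if "e \<in> blowup_edges E" for e
      using blowup_edge_bounds[OF E that] by simp_all
    show "cubic_separated (real ` e) (real ` e')" if "e \<in> blowup_edges E" "e' \<in> blowup_edges E" for e e'
      using E by (intro cubic_separated_blowup_edges[OF _ sepE that]) blast
  qed
qed

lemma blowup_not_weakly_colorable:
  assumes "Suc c < m" and E: "\<forall>e\<in>E. e \<subseteq> {..<N}" and no_col: "\<nexists>\<kappa>. weak_coloring {..<N} E c \<kappa>"
  shows "\<nexists>\<kappa>. weak_coloring {..<blowup_size} (blowup_edges E) (Suc c) \<kappa>"
proof
  assume "\<exists>\<kappa>. weak_coloring {..<blowup_size} (blowup_edges E) (Suc c) \<kappa>"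
  then obtain \<kappa> where \<kappa>: "weak_coloring {..<blowup_size} (blowup_edges E) (Suc c) \<kappa>"
    by blast
  have apex_colors: "(\<kappa> \<circ> apex) ` {..<m} \<subseteq> {1..Suc c}"
    using \<kappa> apex_less[of _ m] unfolding weak_coloring_def blowup_size_def by auto
  with \<open>Suc c < m\<close> obtain i j where ij: "i < j" "j < m" "\<kappa> (apex i) = \<kappa> (apex j)"
    using pigeonhole_lessThan[of "\<kappa> \<circ> apex" m "Suc c"] by auto
  define a where "a = \<kappa> (apex i)"
  have "a \<in> {1..Suc c}"
    using apex_colors ij by (auto simp: a_def)
  have copy_col: "weak_coloring {..<N} E (Suc c) (\<kappa> \<circ> (+) (block_start i j))"
  proof (rule weak_coloring_pullback[OF \<kappa>])
    have "(+) (block_start i j) ` {..<N} \<subseteq> block i j"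
      by (auto simp: block_def)
    with block_subset_blowup[of i j] ij show "(+) (block_start i j) ` {..<N} \<subseteq> {..<blowup_size}"
      by simp
    show "(+) (block_start i j) ` e \<in> blowup_edges E" if "e \<in> E" for e
      using that ij unfolding blowup_edges_def block_copy_def by blast
  qed
  have "\<kappa> (block_start i j + u) \<noteq> a" if "u < N" for u
  proof
    assume "\<kappa> (block_start i j + u) = a"
    then have "\<kappa> ` book_edge i j u = {a}"
      using ij by (auto simp: book_edge_def a_def)
    moreover have "book_edge i j u \<in> blowup_edges E"
      using ij that unfolding blowup_edges_def by blast
    with \<kappa> have "1 < card (\<kappa> ` book_edge i j u)"
      unfolding weak_coloring_def by blast
    ultimately show False
      by simp
  qed
  with weak_coloring_omit_color[OF copy_col E \<open>a \<in> {1..Suc c}\<close>]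
  have "weak_coloring {..<N} E c (\<lambda>v. if (\<kappa> \<circ> (+) (block_start i j)) v < a
      then (\<kappa> \<circ> (+) (block_start i j)) v else (\<kappa> \<circ> (+) (block_start i j)) v - 1)"
    by simp
  with no_col show False
    by blast
qed

end

lemma blowup_size_le:
  assumes "2 \<le> m" "1 \<le> N"
  shows "blowup_size m N \<le> m ^ 3 * N"
proof -
  have "1 * 1 \<le> m * N"
    using assms by (intro mult_le_mono) simp_all
  then have "m \<le> m * (m * N)"
    using mult_le_mono2[of 1 "m * N" m] by simp
  moreover have "2 * (m * (m * N)) \<le> m * (m * (m * N))"
    using assms(1) by (rule mult_le_mono1)
  moreover have "blowup_size m N = m + m * (m * N)" "m ^ 3 * N = m * (m * (m * N))"
    by (simp_all add: blowup_size_def apex_def stride_def power3_eq_cube algebra_simps)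
  ultimately show ?thesis
    by linarith
qed

section \<open>Iterated blow-ups\<close>

fun tower :: "nat \<Rightarrow> nat \<times> nat set set" where
  "tower 0 = (3, {{0, 1, 2}})"
| "tower (Suc k) = (blowup_size (k + 3) (fst (tower k)),
                    blowup_edges (k + 3) (fst (tower k)) (snd (tower k)))"

lemma cubic_separated_system_tower: "cubic_separated_system (fst (tower k)) (snd (tower k))"
proof (induction k)
  case 0
  show ?case
    by (simp add: cubic_separated_system_def cubic_separated_refl)
next
  case (Suc k)
  then show ?case
    by (simp add: cubic_separated_system_blowup)
qed

lemma tower_not_weakly_colorable:
  "\<nexists>\<kappa>. weak_coloring {..<fst (tower k)} (snd (tower k)) (Suc k) \<kappa>"
proof (induction k)
  case 0
  show ?case
  proof
    assume "\<exists>\<kappa>. weak_coloring {..<fst (tower 0)} (snd (tower 0)) (Suc 0) \<kappa>"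
    then obtain \<kappa> where \<kappa>: "weak_coloring {..<3} {{0, 1, 2 :: nat}} 1 \<kappa>"
      by auto
    then have "\<kappa> 0 = 1" "\<kappa> 1 = 1" "\<kappa> 2 = 1" "1 < card (\<kappa> ` {0, 1, 2})"
      unfolding weak_coloring_def by auto
    then show False
      by simp
  qed
next
  case (Suc k)
  have "Suc (Suc k) < k + 3"
    by simp
  moreover have "\<forall>e\<in>snd (tower k). e \<subseteq> {..<fst (tower k)}"
    using cubic_separated_system_tower[of k] unfolding cubic_separated_system_def by blast
  ultimately show ?case
    using blowup_not_weakly_colorable Suc.IH by simp
qed

definition tower_bound :: "nat \<Rightarrow> nat" where
  "tower_bound k = (k + 3) ^ (3 * (k + 1))"

lemma tower_size: "1 \<le> fst (tower k) \<and> fst (tower k) \<le> tower_bound k"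
proof (induction k)
  case 0
  show ?case
    by (simp add: tower_bound_def)
next
  case (Suc k)
  let ?N = "fst (tower k)"
  have "fst (tower (Suc k)) \<le> (k + 3) ^ 3 * ?N"
    using blowup_size_le[of "k + 3" ?N] Suc.IH by simp
  also have "\<dots> \<le> (k + 3) ^ 3 * (k + 3) ^ (3 * (k + 1))"
    using Suc.IH by (simp add: tower_bound_def)
  also have "\<dots> = (k + 3) ^ (3 * (k + 2))"
    by (simp add: power_add[symmetric])
  also have "\<dots> \<le> (k + 4) ^ (3 * (k + 2))"
    by (rule power_mono) simp_all
  also have "\<dots> = tower_bound (Suc k)"
    by (simp add: tower_bound_def add.commute)
  finally have "fst (tower (Suc k)) \<le> tower_bound (Suc k)" .
  moreover have "1 \<le> fst (tower (Suc k))"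
    by (simp add: blowup_size_def apex_def stride_def)
  ultimately show ?case
    by simp
qed

lemma ln_tower_bound: "ln (real (tower_bound k)) = real (3 * (k + 1)) * ln (real k + 3)"
  unfolding tower_bound_def by (simp add: ln_realpow)

lemma ln_ratio_le_of_tower_bound:
  assumes "1 \<le> k" and lo: "tower_bound k \<le> n" and hi: "n < tower_bound (k + 1)"
  shows "1/3 * ln (real n) / ln (ln (real n)) \<le> real k + 2"
proof -
  define L where "L = ln (real n)"
  have "0 < real (tower_bound k)"
    unfolding tower_bound_def by simp
  with lo have "0 < real n"
    by linarith
  have "ln 3 \<le> ln (real k + 3)"
    by simp
  with ln3_gt_1 have "1 < ln (real k + 3)"
    by linarith
  then have "real (3 * (k + 1)) * 1 \<le> real (3 * (k + 1)) * ln (real k + 3)"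
    by (intro mult_left_mono) simp_all
  moreover have "ln (real (tower_bound k)) \<le> L"
    using lo \<open>0 < real (tower_bound k)\<close> \<open>0 < real n\<close> by (simp add: L_def)
  moreover have "real k + 4 \<le> real (3 * (k + 1))"
    using \<open>1 \<le> k\<close> by simp
  ultimately have "real k + 4 \<le> L"
    using ln_tower_bound[of k] by linarith
  then have "ln (real k + 4) \<le> ln L" "0 < ln (real k + 4)" "0 < L"
    by simp_all
  then have "1/3 * L / ln L \<le> 1/3 * L / ln (real k + 4)"
    by (intro divide_left_mono) simp_all
  also have "\<dots> \<le> real k + 2"
  proof -
    have "L < ln (real (tower_bound (k + 1)))"
      using hi \<open>0 < real n\<close> by (simp add: L_def)
    also have "\<dots> = 3 * ((real k + 2) * ln (real k + 4))"
      by (simp add: ln_tower_bound algebra_simps)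
    finally have "1/3 * L \<le> (real k + 2) * ln (real k + 4)"
      by simp
    with \<open>0 < ln (real k + 4)\<close> show ?thesis
      by (simp add: divide_le_eq)
  qed
  finally show ?thesis
    unfolding L_def .
qed

lemma exists_bracketing_index:
  fixes f :: "nat \<Rightarrow> 'a::linorder"
  assumes "a \<le> b" "f a \<le> n" "n < f b"
  shows "\<exists>k\<ge>a. f k \<le> n \<and> n < f (Suc k)"
proof -
  define K where "K = {k. a \<le> k \<and> k < b \<and> f k \<le> n}"
  have "a \<noteq> b"
    using assms(2,3) by auto
  with assms have "a \<in> K"
    by (simp add: K_def)
  moreover have "finite K"
    by (rule finite_subset[of _ "{..<b}"]) (auto simp: K_def)
  ultimately have "Max K \<in> K"
    by (intro Max_in) auto
  moreover have "n < f (Suc (Max K))"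
  proof (rule ccontr)
    assume "\<not> n < f (Suc (Max K))"
    moreover from \<open>Max K \<in> K\<close> have "a \<le> Max K" "Max K < b"
      by (simp_all add: K_def)
    moreover from calculation assms(3) have "Suc (Max K) \<noteq> b"
      by auto
    ultimately have "Suc (Max K) \<in> K"
      by (simp add: K_def not_less)
    with \<open>finite K\<close> show False
      using Max_ge Suc_n_not_le_n by blast
  qed
  ultimately show ?thesis
    unfolding K_def by blast
qed

lemma embeddable_3_3_cubic_separated_system:
  assumes sys: "cubic_separated_system N E" and "N \<le> n"
  shows "embeddable_3_3 {..<n} E"
proof -
  from sys have E: "e \<subseteq> {..<N}" "card e = 3" if "e \<in> E" for e
    using that unfolding cubic_separated_system_def by auto
  from sys have sep: "cubic_separated (real ` e) (real ` e')" if "e \<in> E" "e' \<in> E" for e e'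
    using that unfolding cubic_separated_system_def by auto
  let ?\<phi> = "\<lambda>v. moment_curve (real v)"
  have image_\<phi>: "?\<phi> ` e = moment_curve ` real ` e" for e
    by (simp add: image_image)
  have "uniform_hypergraph 3 {..<n} E"
    unfolding uniform_hypergraph_def using E \<open>N \<le> n\<close> by fastforce
  moreover have "linear_embedding 3 {..<n} E ?\<phi>"
    unfolding linear_embedding_def
  proof (intro conjI ballI)
    fix e assume "e \<in> E"
    then obtain x y z where "e = {x, y, z}" "x \<noteq> y" "x \<noteq> z" "y \<noteq> z"
      using E(2) card_3_iff by metis
    then show "aff_dim (?\<phi> ` e) = int 3 - 1"
      using aff_dim_moment_curve_triple[of "real x" "real y" "real z"] by simp
  next
    fix e1 e2 assume "e1 \<in> E" "e2 \<in> E"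
    then have "finite (real ` e1)"
      using E(2) by (metis card.infinite finite_imageI zero_neq_numeral)
    from convex_hull_moment_curve_Int[OF this sep[OF \<open>e1 \<in> E\<close> \<open>e2 \<in> E\<close>]]
    show "convex hull (?\<phi> ` e1) \<inter> convex hull (?\<phi> ` e2) = convex hull (?\<phi> ` (e1 \<inter> e2))"
      unfolding image_\<phi> image_Int[OF inj_of_nat] .
  qed
  ultimately show ?thesis
    unfolding embeddable_3_3_def by blast
qed

lemma exists_embeddable_with_large_weak_chromatic_number:
  assumes n: "tower_bound 1 \<le> n"
  shows "\<exists>(V::nat set) (E::nat set set). card V = n \<and> embeddable_3_3 V E \<and>
           1/3 * ln (real n) / ln (ln (real n)) \<le> real (weak_chromatic_number V E)"
proof -
  have "n < tower_bound n"
    using self_le_power[of "n + 3" "3 * (n + 1)"] by (simp add: tower_bound_def)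
  moreover have "1 \<le> n"
    using n by (simp add: tower_bound_def)
  ultimately obtain k where k: "1 \<le> k" "tower_bound k \<le> n" "n < tower_bound (k + 1)"
    using exists_bracketing_index[of 1 n tower_bound n] n by auto
  define N E where "N = fst (tower k)" and "E = snd (tower k)"
  have sys: "cubic_separated_system N E" and "N \<le> n"
    using cubic_separated_system_tower tower_size[of k] k(2) by (auto simp: N_def E_def)
  have "Suc k < weak_chromatic_number {..<n} E"
  proof (rule weak_chromatic_number_gt)
    show "weak_coloring {..<n} E n Suc"
      using sys by (intro weak_coloring_Suc) (simp add: cubic_separated_system_def)
    show "\<nexists>\<kappa>. weak_coloring {..<n} E (Suc k) \<kappa>"
      using tower_not_weakly_colorable[of k] weak_coloring_subset[of "{..<N}" "{..<n}"] \<open>N \<le> n\<close>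
      by (auto simp: N_def E_def)
  qed
  with ln_ratio_le_of_tower_bound[OF k]
  have "1/3 * ln (real n) / ln (ln (real n)) \<le> real (weak_chromatic_number {..<n} E)"
    by linarith
  with embeddable_3_3_cubic_separated_system[OF sys \<open>N \<le> n\<close>] show ?thesis
    by (intro exI[of _ "{..<n}"] exI[of _ E]) simp
qed

theorem mainTheorem16:
  shows "\<exists>c::real. c > 0 \<and> (\<exists>n0::nat. \<forall>n\<ge>n0. \<exists>(V::nat set) (E::nat set set).
            card V = n \<and> embeddable_3_3 V E \<and>
            real (weak_chromatic_number V E) \<ge> c * ln (real n) / ln (ln (real n)))"
  using exists_embeddable_with_large_weak_chromatic_number
  by (intro exI[of _ "1/3"] conjI exI[of _ "tower_bound 1"]) simp_all

end
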